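(* For all integers $k\geq 2$ and $i\geq 2k+3$, and all integers $j\geq k+2$, $$R_k^{\mathcal{BIP}}(i,j)=\begin{cases}2j-1-k, & \text{if } k+2\leq j\leq 2k,\\ 2j-1, & \text{if } j\geq 2k+1,\end{cases}$$ where $\mathcal{BIP}$ is the class of bipartite graphs.
   Context: All graphs are finite and simple. For a graph $G$ and a nonnegative integer $k$, a $k$-sparse $j$-set is a set of $j$ vertices of $G$ inducing a subgraph of maximum degree at most $k$; a $k$-dense $i$-set is a set of $i$ vertices of $G$ that is $k$-sparse in the complement of $G$. For a graph class $\mathcal{G}$, $R_k^{\mathcal{G}}(i,j)$ is the smallest natural number $n$ such that every graph on $n$ vertices in $\mathcal{G}$ has either a $k$-dense $i$-set or a $k$-sparse $j$-set. *)

theory Defs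
  imports Main
begin

text \<open>For Ramsey-type numbers we
  may take the vertex set {0..<n}, since the properties are isomorphism invariant.\<close>

definition simple_graph :: "nat set \<Rightarrow> (nat \<Rightarrow> nat \<Rightarrow> bool) \<Rightarrow> bool" where
  "simple_graph V E \<longleftrightarrow> finite V \<and>
     (\<forall>u\<in>V. \<forall>v\<in>V. E u v \<longleftrightarrow> E v u) \<and> (\<forall>v\<in>V. \<not> E v v)"

definition compl_graph :: "(nat \<Rightarrow> nat \<Rightarrow> bool) \<Rightarrow> nat \<Rightarrow> nat \<Rightarrow> bool" where
  "compl_graph E u v \<longleftrightarrow> u \<noteq> v \<and> \<not> E u v"

definition k_sparse_set :: "nat set \<Rightarrow> (nat \<Rightarrow> nat \<Rightarrow> bool) \<Rightarrow> nat \<Rightarrow> nat set \<Rightarrow> bool" where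
  "k_sparse_set V E k S \<longleftrightarrow> S \<subseteq> V \<and> (\<forall>v\<in>S. card {u\<in>S. E v u} \<le> k)"

definition k_dense_set :: "nat set \<Rightarrow> (nat \<Rightarrow> nat \<Rightarrow> bool) \<Rightarrow> nat \<Rightarrow> nat set \<Rightarrow> bool" where
  "k_dense_set V E k S \<longleftrightarrow> k_sparse_set V (compl_graph E) k S"

definition bipartite :: "nat set \<Rightarrow> (nat \<Rightarrow> nat \<Rightarrow> bool) \<Rightarrow> bool" where
  "bipartite V E \<longleftrightarrow> (\<exists>A\<subseteq>V. \<forall>u\<in>V. \<forall>v\<in>V. E u v \<longrightarrow> (u \<in> A \<longleftrightarrow> v \<notin> A))"

definition ramsey_k_class ::
    "(nat set \<Rightarrow> (nat \<Rightarrow> nat \<Rightarrow> bool) \<Rightarrow> bool) \<Rightarrow> nat \<Rightarrow> nat \<Rightarrow> nat \<Rightarrow> nat" where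
  "ramsey_k_class C k i j = (LEAST n. \<forall>E. simple_graph {0..<n} E \<and> C {0..<n} E \<longrightarrow>
      (\<exists>S. card S = i \<and> k_dense_set {0..<n} E k S) \<or>
      (\<exists>S. card S = j \<and> k_sparse_set {0..<n} E k S))"

end

theory Submission
  imports Defs
begin

text \<open>Both sides of a bipartition are independent, and an independent part of a
  \<open>k\<close>-dense set has at most \<open>k + 1\<close> vertices; so a bipartite graph has no \<open>k\<close>-dense
  set of more than \<open>2k + 2 < i\<close> vertices, and only \<open>k\<close>-sparse \<open>j\<close>-sets matter. If a
  side has \<open>j\<close> vertices, any \<open>j\<close> of them form one. Otherwise, for \<open>j \<le> 2k\<close> and enough
  vertices, one takes at most \<open>k\<close> vertices from each side: every vertex then has at
  most \<open>k\<close> neighbours in the set. Sharpness: in a complete bipartite graph a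
  \<open>k\<close>-sparse set lies in one side or meets each side in at most \<open>k\<close> vertices, so
  with one side of size \<open>j - 1\<close> and fewer vertices than claimed there is no
  \<open>k\<close>-sparse \<open>j\<close>-set.\<close>

lemma card_independent_subset_k_dense_le:
  assumes "k_dense_set V E k S" "finite S" "T \<subseteq> S" "\<forall>u\<in>T. \<forall>v\<in>T. \<not> E u v"
  shows "card T \<le> k + 1"
proof (cases "T = {}")
  case False
  then obtain v where v: "v \<in> T" by blast
  have "T - {v} \<subseteq> {u\<in>S. compl_graph E v u}"
    using assms(3,4) v by (auto simp: compl_graph_def)
  then have "card (T - {v}) \<le> card {u\<in>S. compl_graph E v u}"
    using assms(2) by (intro card_mono) auto
  also have "\<dots> \<le> k"
    using assms(1,3) v unfolding k_dense_set_def k_sparse_set_def by blast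
  finally show ?thesis
    using v by (simp add: card_Diff_singleton_if split: if_splits)
qed simp

lemma bipartite_sides_independent:
  assumes "\<forall>u\<in>V. \<forall>v\<in>V. E u v \<longrightarrow> (u \<in> A \<longleftrightarrow> v \<notin> A)"
  shows "\<forall>u\<in>V \<inter> A. \<forall>v\<in>V \<inter> A. \<not> E u v" "\<forall>u\<in>V - A. \<forall>v\<in>V - A. \<not> E u v"
  using assms by auto

lemma k_dense_set_card_le_bipartite:
  assumes "bipartite V E" "k_dense_set V E k S"
  shows "card S \<le> 2 * k + 2"
proof (cases "finite S")
  case True
  obtain A where A: "\<forall>u\<in>V. \<forall>v\<in>V. E u v \<longrightarrow> (u \<in> A \<longleftrightarrow> v \<notin> A)"
    using assms(1) unfolding bipartite_def by blast
  have "S \<subseteq> V"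
    using assms(2) unfolding k_dense_set_def k_sparse_set_def by blast
  then have "card (S \<inter> A) \<le> k + 1" "card (S - A) \<le> k + 1"
    using bipartite_sides_independent[OF A]
    by (intro card_independent_subset_k_dense_le[OF assms(2) True]; blast)+
  moreover have "card S = card (S \<inter> A) + card (S - A)"
    using card_Int_Diff[OF True] .
  ultimately show ?thesis by linarith
qed simp

lemma k_sparse_set_independent:
  assumes "S \<subseteq> V" "\<forall>u\<in>S. \<forall>v\<in>S. \<not> E u v"
  shows "k_sparse_set V E k S"
  unfolding k_sparse_set_def
proof (intro conjI ballI)
  fix v assume "v \<in> S"
  then have no_neighbours: "{u\<in>S. E v u} = {}"
    using assms(2) by blast
  show "card {u\<in>S. E v u} \<le> k"
    unfolding no_neighbours by simp
qed (rule assms(1))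

lemma k_sparse_set_Un_sides:
  assumes "\<forall>u\<in>V. \<forall>v\<in>V. E u v \<longrightarrow> (u \<in> A \<longleftrightarrow> v \<notin> A)"
    and "X \<subseteq> V \<inter> A" "Y \<subseteq> V - A" "finite X" "finite Y" "card X \<le> k" "card Y \<le> k"
  shows "k_sparse_set V E k (X \<union> Y)"
  unfolding k_sparse_set_def
proof (intro conjI ballI)
  fix v assume "v \<in> X \<union> Y"
  then have "{u \<in> X \<union> Y. E v u} \<subseteq> Y \<or> {u \<in> X \<union> Y. E v u} \<subseteq> X"
    using assms(1-3) by blast
  then show "card {u \<in> X \<union> Y. E v u} \<le> k"
    using assms(4-7) card_mono le_trans by metis
qed (use assms(2,3) in blast)

lemma bipartite_has_k_sparse_set:
  assumes "finite V" "bipartite V E" "k < j"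
    and "(if j \<le> 2 * k then 2 * j - 1 - k else 2 * j - 1) \<le> card V"
  shows "\<exists>S. card S = j \<and> k_sparse_set V E k S"
proof -
  obtain A where A: "\<forall>u\<in>V. \<forall>v\<in>V. E u v \<longrightarrow> (u \<in> A \<longleftrightarrow> v \<notin> A)"
    using assms(2) unfolding bipartite_def by blast
  define X Y where "X = V \<inter> A" and "Y = V - A"
  have fin: "finite X" "finite Y"
    using assms(1) unfolding X_def Y_def by auto
  have card_V: "card V = card X + card Y"
    unfolding X_def Y_def using card_Int_Diff[OF assms(1)] .
  have from_side: "\<exists>S. card S = j \<and> k_sparse_set V E k S"
    if "T \<subseteq> V" "\<forall>u\<in>T. \<forall>v\<in>T. \<not> E u v" "j \<le> card T" for T
  proof -
    obtain S where "S \<subseteq> T" "card S = j"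
      using obtain_subset_with_card_n[OF \<open>j \<le> card T\<close>] by blast
    moreover have "k_sparse_set V E k S"
      using \<open>S \<subseteq> T\<close> that(1,2) by (intro k_sparse_set_independent) blast+
    ultimately show ?thesis by blast
  qed
  have "j \<le> card X \<or> j \<le> card Y \<or> card X < j \<and> card Y < j \<and> j \<le> 2 * k"
    using assms(4) card_V by (auto split: if_splits)
  then consider "j \<le> card X" | "j \<le> card Y" | "card X < j" "card Y < j" "j \<le> 2 * k"
    by blast
  then show ?thesis
  proof cases
    case 1
    then show ?thesis
      using from_side bipartite_sides_independent(1)[OF A] X_def by blast
  next
    case 2
    then show ?thesis
      using from_side bipartite_sides_independent(2)[OF A] Y_def by blast
  next
    case 3
    define x where "x = min (card X) k"
    have sizes: "x \<le> card X" "x \<le> k" "j - x \<le> card Y" "j - x \<le> k"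
      using 3 assms(3,4) card_V unfolding x_def by auto
    obtain SX where SX: "SX \<subseteq> X" "card SX = x"
      using obtain_subset_with_card_n[OF sizes(1)] by blast
    obtain SY where SY: "SY \<subseteq> Y" "card SY = j - x"
      using obtain_subset_with_card_n[OF sizes(3)] by blast
    have fin_S: "finite SX" "finite SY"
      using SX(1) SY(1) fin finite_subset by blast+
    have "card (SX \<union> SY) = j"
      using SX SY fin_S sizes(1) \<open>k < j\<close> \<open>x \<le> k\<close> unfolding X_def Y_def
      by (subst card_Un_disjoint) auto
    moreover have "k_sparse_set V E k (SX \<union> SY)"
      using k_sparse_set_Un_sides[OF A] SX SY fin_S sizes unfolding X_def Y_def by simp
    ultimately show ?thesis by blast
  qed
qed

definition complete_bipartite :: "nat \<Rightarrow> nat \<Rightarrow> nat \<Rightarrow> bool" where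
  "complete_bipartite a u v \<longleftrightarrow> (u < a \<and> a \<le> v) \<or> (v < a \<and> a \<le> u)"

lemma simple_graph_complete_bipartite: "simple_graph {0..<n} (complete_bipartite a)"
  unfolding simple_graph_def complete_bipartite_def by auto

lemma bipartite_complete_bipartite: "bipartite {0..<n} (complete_bipartite a)"
  unfolding bipartite_def complete_bipartite_def
  by (rule exI[of _ "{0..<min a n}"]) auto

lemma k_sparse_set_complete_bipartite_card_le:
  assumes "k_sparse_set {0..<n} (complete_bipartite a) k S"
  shows "card S \<le> max a (n - a) \<or> card S \<le> min a k + min (n - a) k"
proof -
  define X Y where "X = S \<inter> {..<a}" and "Y = S - {..<a}"
  have "S \<subseteq> {0..<n}" and degree: "\<forall>v\<in>S. card {u\<in>S. complete_bipartite a v u} \<le> k"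
    using assms unfolding k_sparse_set_def by blast+
  then have fin: "finite S" and "X \<subseteq> {..<a}" "Y \<subseteq> {a..<n}"
    unfolding X_def Y_def using finite_subset by auto
  then have sides: "card X \<le> a" "card Y \<le> n - a"
    using card_mono[of "{..<a}" X] card_mono[of "{a..<n}" Y] by simp_all
  have card_S: "card S = card X + card Y"
    unfolding X_def Y_def using card_Int_Diff[OF fin] .
  show ?thesis
  proof (cases "X = {} \<or> Y = {}")
    case True
    then show ?thesis
      using sides card_S by auto
  next
    case False
    then obtain x y where x: "x \<in> X" and y: "y \<in> Y" by blast
    then have "{u\<in>S. complete_bipartite a x u} = Y" "{u\<in>S. complete_bipartite a y u} = X"
      unfolding X_def Y_def complete_bipartite_def by auto
    moreover have "x \<in> S" "y \<in> S"
      using x y unfolding X_def Y_def by blast+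
    ultimately have "card Y \<le> k" "card X \<le> k"
      using degree by metis+
    then show ?thesis
      using sides card_S by auto
  qed
qed

lemma ramsey_k_class_eqI:
  assumes "\<And>E. simple_graph {0..<n} E \<Longrightarrow> C {0..<n} E \<Longrightarrow>
      (\<exists>S. card S = i \<and> k_dense_set {0..<n} E k S) \<or> (\<exists>S. card S = j \<and> k_sparse_set {0..<n} E k S)"
    and "\<And>m. m < n \<Longrightarrow> \<exists>E. simple_graph {0..<m} E \<and> C {0..<m} E \<and>
      (\<forall>S. card S = i \<longrightarrow> \<not> k_dense_set {0..<m} E k S) \<and>
      (\<forall>S. card S = j \<longrightarrow> \<not> k_sparse_set {0..<m} E k S)"
  shows "ramsey_k_class C k i j = n"
  unfolding ramsey_k_class_def
proof (rule Least_equality)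
  fix m
  assume "\<forall>E. simple_graph {0..<m} E \<and> C {0..<m} E \<longrightarrow>
      (\<exists>S. card S = i \<and> k_dense_set {0..<m} E k S) \<or> (\<exists>S. card S = j \<and> k_sparse_set {0..<m} E k S)"
  then show "n \<le> m"
    using assms(2) by (meson not_le)
qed (use assms(1) in blast)

theorem theorem5p5:
  fixes k i j :: nat
  assumes "k \<ge> 2" and "i \<ge> 2 * k + 3" and "j \<ge> k + 2"
  shows "ramsey_k_class bipartite k i j = (if j \<le> 2 * k then 2 * j - 1 - k else 2 * j - 1)"
proof -
  let ?n = "if j \<le> 2 * k then 2 * j - 1 - k else 2 * j - 1"
  show ?thesis
  proof (rule ramsey_k_class_eqI)
    fix E
    assume "bipartite {0..<?n} E"
    then show "(\<exists>S. card S = i \<and> k_dense_set {0..<?n} E k S) \<or>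
        (\<exists>S. card S = j \<and> k_sparse_set {0..<?n} E k S)"
      using bipartite_has_k_sparse_set[of "{0..<?n}"] assms(3) by simp
  next
    fix m
    assume "m < ?n"
    then have "max (j - 1) (m - (j - 1)) < j" "min (j - 1) k + min (m - (j - 1)) k < j"
      using assms(3) by (auto split: if_splits)
    then have "\<not> k_sparse_set {0..<m} (complete_bipartite (j - 1)) k S" if "card S = j" for S
      using k_sparse_set_complete_bipartite_card_le that by fastforce
    moreover have "\<not> k_dense_set {0..<m} (complete_bipartite (j - 1)) k S" if "card S = i" for S
      using k_dense_set_card_le_bipartite[OF bipartite_complete_bipartite] that assms(2)
      by fastforce
    ultimately show "\<exists>E. simple_graph {0..<m} E \<and> bipartite {0..<m} E \<and>
        (\<forall>S. card S = i \<longrightarrow> \<not> k_dense_set {0..<m} E k S) \<and>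
        (\<forall>S. card S = j \<longrightarrow> \<not> k_sparse_set {0..<m} E k S)"
      using simple_graph_complete_bipartite bipartite_complete_bipartite by blast
  qed
qed

end
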